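(* Let $t_{kl}\ge0$ for $(k,l)\neq(0,0)$, let $\mathcal{G}=\sum_{k,l}t_{kl}\mathcal{L}_{kl}$ and $\Phi=e^{\mathcal{G}}\in\mathcal{A}_N^Q$. Then $\mathcal{D}_h(\mathcal{G})=\sum_{k=1}^{N-1}t_k\mathcal{K}_k$ with $t_k=\sum_lt_{kl}$, and $$\mathcal{D}_h\big(e^{\mathcal{G}}\big)=e^{\mathcal{D}_h(\mathcal{G})}=\exp\Big(\sum_{k=1}^{N-1}t_k\mathcal{K}_k\Big);$$ in particular the circulant bistochastic matrix $\mathcal{D}_h(\Phi)$ belongs to $\mathcal{A}_N^C$ (hyper-decoherence commutes with the semigroup time evolution).
   Context: Let $N\ge2$, $\omega=e^{2\pi i/N}$, $X|j\rangle=|j\oplus1\rangle$ (addition mod $N$), $Z=\mathrm{diag}(1,\omega,\dots,\omega^{N-1})$, Weyl unitaries $U_{kl}=X^kZ^l$. Superoperators are $N^2\times N^2$ matrices acting on $|A\rangle\rangle=\sum A_{ij}|i\rangle|j\rangle$ ($\rho\mapsto K\rho K^\dagger$ corresponds to $K\otimes\overline K$). $\mathcal{L}_{kl}=U_{kl}\otimes\overline{U}_{kl}-\mathbb{I}_{N^2}$; $\mathcal{A}_N^Q$ is the set of $\exp(\sum_{(k,l)\ne(0,0)}t_{kl}\mathcal{L}_{kl})$ with $t_{kl}\ge0$. Hyper-decoherence of a superoperator $M$ is the $N\times N$ matrix $\mathcal{D}_h(M)_{ij}=\langle ii|M|jj\rangle$. $\mathcal{K}_k=X^k-\mathbb{I}_N$,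 and $\mathcal{A}_N^C$ is the set of $\exp(\sum_{k=1}^{N-1}t_k\mathcal{K}_k)$ with $t_k\ge0$. *)

theory Defs
  imports Complex_Main
begin

text \<open>Square matrices are represented as functions \<open>'a \<Rightarrow> 'a \<Rightarrow> complex\<close>
  together with an explicit finite index set \<open>I\<close>; only entries with
  indices in \<open>I\<close> are meaningful.  For \<open>N \<times> N\<close> matrices \<open>I = {..<N}\<close>;
  for superoperators (\<open>N^2 \<times> N^2\<close>) the index set is \<open>{..<N} \<times> {..<N}\<close>,
  the pair \<open>(i,j)\<close> standing for the basis vector \<open>|i\<rangle>|j\<rangle>\<close>.\<close>

type_synonym 'a cmat = "'a \<Rightarrow> 'a \<Rightarrow> complex"

definition mone :: "'a cmat" where
  "mone = (\<lambda>i j. if i = j then 1 else 0)"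

definition mmult :: "'a set \<Rightarrow> 'a cmat \<Rightarrow> 'a cmat \<Rightarrow> 'a cmat" where
  "mmult I A B = (\<lambda>i j. \<Sum>k\<in>I. A i k * B k j)"

fun mpow :: "'a set \<Rightarrow> 'a cmat \<Rightarrow> nat \<Rightarrow> 'a cmat" where
  "mpow I A 0 = mone"
| "mpow I A (Suc n) = mmult I A (mpow I A n)"

definition mexp :: "'a set \<Rightarrow> 'a cmat \<Rightarrow> 'a cmat" where
  "mexp I A = (\<lambda>i j. \<Sum>n. mpow I A n i j / of_nat (fact n))"

definition omega :: "nat \<Rightarrow> complex" where
  "omega N = cis (2 * pi / real N)"

definition Xm :: "nat \<Rightarrow> nat cmat" where
  "Xm N = (\<lambda>i j. if i = (j + 1) mod N then 1 else 0)"

definition Zm :: "nat \<Rightarrow> nat cmat" where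
  "Zm N = (\<lambda>i j. if i = j then omega N ^ i else 0)"

definition Uw :: "nat \<Rightarrow> nat \<Rightarrow> nat \<Rightarrow> nat cmat" where
  "Uw N k l = mmult {..<N} (mpow {..<N} (Xm N) k) (mpow {..<N} (Zm N) l)"

text \<open>\<open>K \<otimes> conj K\<close> acting on \<open>|A\<rangle>\<rangle> = \<Sum> A_ij |i\<rangle>|j\<rangle>\<close>.\<close>
definition tensor_conj :: "nat cmat \<Rightarrow> (nat \<times> nat) cmat" where
  "tensor_conj K = (\<lambda>(i, j) (i', j'). K i i' * cnj (K j j'))"

definition superidx :: "nat \<Rightarrow> (nat \<times> nat) set" where
  "superidx N = {..<N} \<times> {..<N}"

definition Lsup :: "nat \<Rightarrow> nat \<Rightarrow> nat \<Rightarrow> (nat \<times> nat) cmat" where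
  "Lsup N k l = (\<lambda>a b. tensor_conj (Uw N k l) a b - mone a b)"

definition hyper_dec :: "(nat \<times> nat) cmat \<Rightarrow> nat cmat" where
  "hyper_dec M = (\<lambda>i j. M (i, i) (j, j))"

definition Kc :: "nat \<Rightarrow> nat \<Rightarrow> nat cmat" where
  "Kc N k = (\<lambda>i j. mpow {..<N} (Xm N) k i j - mone i j)"

definition weyl_idx :: "nat \<Rightarrow> (nat \<times> nat) set" where
  "weyl_idx N = ({..<N} \<times> {..<N}) - {(0, 0)}"

definition qgen :: "nat \<Rightarrow> (nat \<Rightarrow> nat \<Rightarrow> real) \<Rightarrow> (nat \<times> nat) cmat" where
  "qgen N t = (\<lambda>a b. \<Sum>(k, l)\<in>weyl_idx N. complex_of_real (t k l) * Lsup N k l a b)"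

definition cgen :: "nat \<Rightarrow> (nat \<Rightarrow> real) \<Rightarrow> nat cmat" where
  "cgen N s = (\<lambda>i j. \<Sum>k = 1..N - 1. complex_of_real (s k) * Kc N k i j)"

definition A_Q :: "nat \<Rightarrow> (nat \<times> nat) cmat set" where
  "A_Q N = {\<Phi>. \<exists>t. (\<forall>(k, l)\<in>weyl_idx N. t k l \<ge> 0) \<and>
      (\<forall>a\<in>superidx N. \<forall>b\<in>superidx N. \<Phi> a b = mexp (superidx N) (qgen N t) a b)}"

definition A_C :: "nat \<Rightarrow> nat cmat set" where
  "A_C N = {M. \<exists>s. (\<forall>k\<in>{1..N - 1}. s k \<ge> 0) \<and>
      (\<forall>i<N. \<forall>j<N. M i j = mexp {..<N} (cgen N s) i j)}"

end

theory Submission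
  imports Defs
begin

text \<open>The Weyl unitary \<open>U\<^sub>k\<^sub>l\<close> is a phased permutation matrix, so
  \<open>U\<^sub>k\<^sub>l \<otimes> conj U\<^sub>k\<^sub>l\<close> sends \<open>|jj\<rangle>\<close> to \<open>|\<omega>\<^sup>j\<^sup>l|\<^sup>2 |j+k, j+k\<rangle> = |j+k, j+k\<rangle>\<close>.
  Hence the span of the diagonal vectors \<open>|jj\<rangle>\<close> is invariant under every
  \<open>L\<^sub>k\<^sub>l\<close>, and so under the generator \<open>G\<close>; on that span \<open>L\<^sub>k\<^sub>l\<close> acts as \<open>K\<^sub>k\<close>.
  An invariant subspace is invariant under all powers of \<open>G\<close>, and the
  compression of \<open>G\<^sup>n\<close> to it is the \<open>n\<close>-th power of the compression
  \<open>D\<^sub>h(G)\<close>; summing the exponential series gives \<open>D\<^sub>h(exp G) = exp (D\<^sub>h G)\<close>.\<close>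

lemma sum_eq_single:
  assumes "finite A" "c \<in> A" "\<And>d. d \<in> A \<Longrightarrow> d \<noteq> c \<Longrightarrow> g d = 0"
  shows "sum g A = g c"
  using sum.mono_neutral_left[of A "{c}" g] assms by auto

lemma mpow_cong:
  assumes "\<forall>i\<in>I. \<forall>j\<in>I. A i j = B i j" "i \<in> I" "j \<in> I"
  shows "mpow I A n i j = mpow I B n i j"
  using assms(2) by (induction n arbitrary: i) (simp_all add: mmult_def assms(1))

lemma mexp_cong:
  assumes "\<forall>i\<in>I. \<forall>j\<in>I. A i j = B i j" "i \<in> I" "j \<in> I"
  shows "mexp I A i j = mexp I B i j"
  using mpow_cong[OF assms] by (simp add: mexp_def)

lemma mpow_Xm:
  assumes "j < N"
  shows "mpow {..<N} (Xm N) k i j = (if i = (j + k) mod N then 1 else 0)"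
proof (induction k arbitrary: i)
  case 0
  then show ?case using assms by (simp add: mone_def)
next
  case (Suc k)
  have "mpow {..<N} (Xm N) (Suc k) i j = Xm N i ((j + k) mod N)"
    unfolding mpow.simps mmult_def using assms
    by (subst sum_eq_single[where c = "(j + k) mod N"]) (simp_all add: Suc.IH)
  then show ?case by (simp add: Xm_def mod_Suc_eq)
qed

lemma mpow_Zm:
  assumes "j < N"
  shows "mpow {..<N} (Zm N) l i j = (if i = j then omega N ^ (j * l) else 0)"
proof (induction l arbitrary: i)
  case 0
  then show ?case by (simp add: mone_def)
next
  case (Suc l)
  have "mpow {..<N} (Zm N) (Suc l) i j = Zm N i j * omega N ^ (j * l)"
    unfolding mpow.simps mmult_def using assms
    by (subst sum_eq_single[where c = j]) (simp_all add: Suc.IH)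
  then show ?case by (simp add: Zm_def power_add)
qed

lemma Uw_apply:
  assumes "j < N"
  shows "Uw N k l i j = (if i = (j + k) mod N then omega N ^ (j * l) else 0)"
  unfolding Uw_def mmult_def using assms
  by (subst sum_eq_single[where c = j]) (simp_all add: mpow_Zm mpow_Xm)

lemma omega_pow_mult_cnj: "omega N ^ n * cnj (omega N) ^ n = 1"
  by (simp add: omega_def cis_cnj cis_mult flip: power_mult_distrib)

lemma Lsup_off_diagonal:
  assumes "a \<noteq> b" "c < N"
  shows "Lsup N k l (a, b) (c, c) = 0"
  using assms by (auto simp: Lsup_def tensor_conj_def Uw_apply mone_def)

lemma hyper_dec_Lsup:
  assumes "i < N" "j < N"
  shows "hyper_dec (Lsup N k l) i j = Kc N k i j"
  using assms
  by (simp add: hyper_dec_def Lsup_def tensor_conj_def Uw_apply mone_def Kc_def mpow_Xm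
      omega_pow_mult_cnj)

lemma Kc_0:
  assumes "j < N"
  shows "Kc N 0 i j = 0"
  using assms by (simp add: Kc_def mone_def)

text \<open>The span of the diagonal basis vectors \<open>|cc\<rangle>\<close>, \<open>c \<in> I\<close>, is invariant
  under \<open>M\<close>.\<close>

definition diagonal_invariant :: "nat set \<Rightarrow> (nat \<times> nat) cmat \<Rightarrow> bool" where
  "diagonal_invariant I M \<longleftrightarrow> (\<forall>a b c. a \<noteq> b \<longrightarrow> c \<in> I \<longrightarrow> M (a, b) (c, c) = 0)"

lemma diagonal_invariant_mpow:
  assumes "diagonal_invariant I M"
  shows "diagonal_invariant I (mpow (I \<times> I) M n)"
proof (induction n)
  case 0
  then show ?case by (simp add: diagonal_invariant_def mone_def)
next
  case (Suc n)
  have "M (a, b) x * mpow (I \<times> I) M n x (c, c) = 0"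
    if "a \<noteq> b" "c \<in> I" "x \<in> I \<times> I" for a b c x
    using that assms Suc.IH by (cases x; cases "fst x = snd x") (auto simp: diagonal_invariant_def)
  then show ?case unfolding diagonal_invariant_def by (auto simp: mmult_def intro!: sum.neutral)
qed

lemma hyper_dec_mpow:
  assumes "finite I" "diagonal_invariant I M" "i \<in> I" "j \<in> I"
  shows "hyper_dec (mpow (I \<times> I) M n) i j = mpow I (hyper_dec M) n i j"
  using assms(3)
proof (induction n arbitrary: i)
  case 0
  then show ?case by (simp add: hyper_dec_def mone_def)
next
  case (Suc n)
  let ?P = "mpow (I \<times> I) M n"
  have "(\<Sum>d\<in>I. M (i, i) (c, d) * ?P (c, d) (j, j)) = M (i, i) (c, c) * ?P (c, c) (j, j)"
    if "c \<in> I" for c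
    using that assms(1,4) diagonal_invariant_mpow[OF assms(2), of n]
    by (intro sum_eq_single) (auto simp: diagonal_invariant_def)
  then have "hyper_dec (mpow (I \<times> I) M (Suc n)) i j
      = (\<Sum>c\<in>I. M (i, i) (c, c) * ?P (c, c) (j, j))"
    by (simp add: hyper_dec_def mmult_def sum.cartesian_product')
  also have "\<dots> = mpow I (hyper_dec M) (Suc n) i j"
    using Suc.IH by (simp add: mmult_def hyper_dec_def)
  finally show ?case .
qed

lemma hyper_dec_mexp:
  assumes "finite I" "diagonal_invariant I M" "i \<in> I" "j \<in> I"
  shows "hyper_dec (mexp (I \<times> I) M) i j = mexp I (hyper_dec M) i j"
  using hyper_dec_mpow[OF assms] by (simp add: hyper_dec_def mexp_def)

lemma diagonal_invariant_qgen: "diagonal_invariant {..<N} (qgen N t)"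
  by (simp add: diagonal_invariant_def qgen_def Lsup_off_diagonal case_prod_beta)

lemma hyper_dec_qgen:
  assumes "i < N" "j < N"
  shows "hyper_dec (qgen N t) i j = cgen N (\<lambda>k. \<Sum>l<N. t k l) i j"
proof -
  define f where "f k l = complex_of_real (t k l) * Kc N k i j" for k l
  have "hyper_dec (qgen N t) i j = (\<Sum>(k, l)\<in>weyl_idx N. f k l)"
    using assms by (simp add: hyper_dec_def qgen_def f_def hyper_dec_Lsup[unfolded hyper_dec_def])
  also have "\<dots> = (\<Sum>(k, l)\<in>{..<N} \<times> {..<N}. f k l)"
    using assms by (intro sum.mono_neutral_left) (auto simp: weyl_idx_def f_def Kc_0)
  also have "\<dots> = (\<Sum>k<N. \<Sum>l<N. f k l)"
    by (simp add: sum.cartesian_product)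
  also have "\<dots> = (\<Sum>k\<in>{1..N-1}. \<Sum>l<N. f k l)"
  proof -
    have "{..<N} = insert 0 {1..N-1}" using assms by auto
    then show ?thesis using assms by (simp add: f_def Kc_0)
  qed
  also have "\<dots> = cgen N (\<lambda>k. \<Sum>l<N. t k l) i j"
    by (simp add: cgen_def f_def sum_distrib_right)
  finally show ?thesis .
qed

theorem theorem3:
  fixes N :: nat and t :: "nat \<Rightarrow> nat \<Rightarrow> real"
  assumes "N \<ge> 2"
    and "\<forall>(k, l)\<in>weyl_idx N. t k l \<ge> 0"
  defines "G \<equiv> qgen N t"
    and "\<Phi> \<equiv> mexp (superidx N) (qgen N t)"
    and "tk \<equiv> (\<lambda>k. \<Sum>l<N. t k l)"
  shows "\<Phi> \<in> A_Q N \<and>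
    (\<forall>i<N. \<forall>j<N. hyper_dec G i j = cgen N tk i j) \<and>
    (\<forall>i<N. \<forall>j<N. hyper_dec (mexp (superidx N) G) i j = mexp {..<N} (hyper_dec G) i j) \<and>
    (\<forall>i<N. \<forall>j<N. hyper_dec (mexp (superidx N) G) i j = mexp {..<N} (cgen N tk) i j) \<and>
    hyper_dec \<Phi> \<in> A_C N"
proof -
  have in_A_Q: "\<Phi> \<in> A_Q N"
    using assms(2) unfolding A_Q_def \<Phi>_def by blast
  have generator: "\<forall>i<N. \<forall>j<N. hyper_dec G i j = cgen N tk i j"
    by (simp add: G_def tk_def hyper_dec_qgen)
  have commute: "\<forall>i<N. \<forall>j<N. hyper_dec (mexp (superidx N) G) i j = mexp {..<N} (hyper_dec G) i j"
    by (simp add: G_def superidx_def hyper_dec_mexp diagonal_invariant_qgen)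
  have evolution: "\<forall>i<N. \<forall>j<N. hyper_dec (mexp (superidx N) G) i j = mexp {..<N} (cgen N tk) i j"
    using generator commute mexp_cong[of "{..<N}" "hyper_dec G" "cgen N tk"] by simp
  have "tk k \<ge> 0" if "k \<in> {1..N-1}" for k
    using assms(2) that unfolding tk_def by (intro sum_nonneg) (auto simp: weyl_idx_def)
  then have "hyper_dec \<Phi> \<in> A_C N"
    using evolution unfolding A_C_def \<Phi>_def G_def by blast
  with in_A_Q generator commute evolution show ?thesis by blast
qed

end
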